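(* Suppose Assumption 1 holds. Let $N\ge 1$, let $\Phi_N:\Xi\to\mathbb{R}^N$ be any feature map and let $W^\star(x)$ be a minimizer of $G_{\Phi_N}(x,\cdot)$. Then for every $x\in\mathbb{R}^{d_x}$, $$\|\nabla F(x)-\nabla F_{\Phi_N}(x)\|\le K\cdot \mathbb{E}_{\xi\sim\mathbb{P}_\xi}\big\|W^\star(x)\Phi_N(\xi)-y^\star(x,\xi)\big\|,$$ where $K = L_{f,1} + \frac{L_{g,2} L_{f,0}}{\mu} + \frac{L_{g,2} L_{g,1} L_{f,0}}{\mu^2} + \frac{L_{f,1} L_{g, 1}}{\mu}$.
   Context: Setting. Let $d_x,d_y,d_\xi,d_\eta\ge 1$. Let $(\xi,\eta)$ be a random vector in $\mathbb{R}^{d_\xi}\times\mathbb{R}^{d_\eta}$ with joint law $\mathbb{P}_{(\xi,\eta)}$; $\mathbb{P}_\xi$ is the marginal law of $\xi$, with support $\Xi\subseteq\mathbb{R}^{d_\xi}$, and $\mathbb{P}_{\eta|\xi}$ the conditional law of $\eta$ given $\xi$. Let $f,g:\mathbb{R}^{d_x}\times\mathbb{R}^{d_y}\times\Xi\times\mathbb{R}^{d_\eta}\to\mathbb{R}$ be twice differentiable in $(x,y)$. Put $G(x,y,\xi)=\mathbb{E}_{\eta\sim\mathbb{P}_{\eta|\xi}}[g(x,y,\xi,\eta)]$, $y^\star(x,\xi)=\arg\min_{y\in\mathbb{R}^{d_y}}G(x,y,\xi)$, and $F(x)=\mathbb{E}_{(\xi,\eta)}[f(x,y^\star(x,\xi),\xi,\eta)]$.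 $\nabla_1,\nabla_2$ denote partial gradients in $x$ and $y$; $\nabla^2_{12},\nabla^2_{22}$ the corresponding blocks of the Hessian. $\|\cdot\|$ is the Euclidean norm for vectors and the spectral norm for matrices. The variance of a random vector/matrix $X$ is $\mathbb{E}\|X-\mathbb{E}X\|^2$. Assumption 1: (i) $f,\nabla f,\nabla g,\nabla^2 g$ (derivatives in $(x,y)$) are $L_{f,0},L_{f,1},L_{g,1},L_{g,2}$-Lipschitz in $(x,y)$ for every fixed $(\xi,\eta)$; (ii) $g$ is $\mu$-strongly convex in $y$ ($\mu>0$) for all $(x,\xi,\eta)$; (iii) for $\eta\sim\mathbb{P}_{\eta|\xi}$, $\nabla f,\nabla g,\nabla^2 g$ are unbiased estimators of the corresponding derivatives of $\mathbb{E}_{\eta|\xi}f$, $G$, with (conditional) variances bounded by $\sigma_f^2,\sigma_{g,1}^2,\sigma_{g,2}^2$ uniformly in $x,y,\xi$. Basis notation. For a feature map $\Phi_N:\Xi\to\mathbb{R}^N$ and $W\in\mathbb{R}^{d_y\times N}$, set $f_{\Phi_N}(x,W,\xi,\eta)=f(x,W\Phi_N(\xi),\xi,\eta)$, $g_{\Phi_N}(x,W,\xi,\eta)=g(x,W\Phi_N(\xi),\xi,\eta)$, $G_{\Phi_N}(x,W)=\mathbb{E}_{(\xi,\eta)}[g_{\Phi_N}(x,W,\xi,\eta)]$, $W^\star(x)\in\arg\min_W G_{\Phi_N}(x,W)$, $F_{\Phi_N}(x)=\mathbb{E}_{(\xi,\eta)}[f_{\Phi_N}(x,W^\star(x),\xi,\eta)]$.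 Hypergradients. Here $\nabla F(x)$ and $\nabla F_{\Phi_N}(x)$ denote $\nabla F(x)=\mathbb{E}_{(\xi,\eta)}\big[\nabla_1 f(x,\bar y,\xi,\eta)-\nabla^2_{12}g(x,\bar y,\xi,\eta)[\nabla^2_{22}g(x,\bar y,\xi,\eta)]^{-1}\nabla_2 f(x,\bar y,\xi,\eta)\big]$ with $\bar y=y^\star(x,\xi)$, and $\nabla F_{\Phi_N}(x)$ is the same expression with $\bar y=W^\star(x)\Phi_N(\xi)$. *)

theory Defs
  imports "HOL-Probability.Probability"
begin

definition grad :: "('a::euclidean_space \<Rightarrow> real) \<Rightarrow> 'a \<Rightarrow> 'a" where
  "grad h p = (\<Sum>b\<in>Basis. frechet_derivative h (at p) b *\<^sub>R b)"

definition hess :: "('a::euclidean_space \<Rightarrow> real) \<Rightarrow> 'a \<Rightarrow> 'a \<Rightarrow> 'a" where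
  "hess h p = frechet_derivative (grad h) (at p)"

definition grad1 :: "((real^'n) \<times> (real^'m) \<Rightarrow> real) \<Rightarrow> (real^'n) \<times> (real^'m) \<Rightarrow> real^'n" where
  "grad1 h p = fst (grad h p)"
definition grad2 :: "((real^'n) \<times> (real^'m) \<Rightarrow> real) \<Rightarrow> (real^'n) \<times> (real^'m) \<Rightarrow> real^'m" where
  "grad2 h p = snd (grad h p)"
definition hess12 :: "((real^'n) \<times> (real^'m) \<Rightarrow> real) \<Rightarrow> (real^'n) \<times> (real^'m) \<Rightarrow> real^'m^'n" where
  "hess12 h p = matrix (\<lambda>v. fst (hess h p (0, v)))"
definition hess22 :: "((real^'n) \<times> (real^'m) \<Rightarrow> real) \<Rightarrow> (real^'n) \<times> (real^'m) \<Rightarrow> real^'m^'m" where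
  "hess22 h p = matrix (\<lambda>v. snd (hess h p (0, v)))"

definition sec :: "('x \<Rightarrow> 'y \<Rightarrow> 'c \<Rightarrow> 'e \<Rightarrow> real) \<Rightarrow> 'c \<Rightarrow> 'e \<Rightarrow> 'x \<times> 'y \<Rightarrow> real" where
  "sec f \<xi> \<eta> = (\<lambda>(x, y). f x y \<xi> \<eta>)"

definition strongly_convex_on :: "real \<Rightarrow> 'a::real_normed_vector set \<Rightarrow> ('a \<Rightarrow> real) \<Rightarrow> bool" where
  "strongly_convex_on \<mu> S h \<longleftrightarrow> convex S \<and> (\<forall>u\<in>S. \<forall>v\<in>S. \<forall>t::real. 0 \<le> t \<and> t \<le> 1 \<longrightarrow>
     h (t *\<^sub>R u + (1 - t) *\<^sub>R v) \<le> t * h u + (1 - t) * h v - \<mu> / 2 * t * (1 - t) * (norm (u - v))\<^sup>2)"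

definition msupport :: "'a::metric_space measure \<Rightarrow> 'a set" where
  "msupport M = {z. \<forall>e>0. emeasure M (ball z e) > 0}"

definition hyper_integrand ::
  "(real^'x \<Rightarrow> real^'y \<Rightarrow> 'c \<Rightarrow> 'e \<Rightarrow> real) \<Rightarrow> (real^'x \<Rightarrow> real^'y \<Rightarrow> 'c \<Rightarrow> 'e \<Rightarrow> real)
    \<Rightarrow> real^'x \<Rightarrow> real^'y \<Rightarrow> 'c \<Rightarrow> 'e \<Rightarrow> real^'x" where
  "hyper_integrand f g x y \<xi> \<eta> =
     grad1 (sec f \<xi> \<eta>) (x, y)
     - hess12 (sec g \<xi> \<eta>) (x, y) *v (matrix_inv (hess22 (sec g \<xi> \<eta>) (x, y)) *v grad2 (sec f \<xi> \<eta>) (x, y))"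

definition hypergrad ::
  "('c \<times> 'e) measure \<Rightarrow> (real^'x \<Rightarrow> real^'y \<Rightarrow> 'c \<Rightarrow> 'e \<Rightarrow> real) \<Rightarrow> (real^'x \<Rightarrow> real^'y \<Rightarrow> 'c \<Rightarrow> 'e \<Rightarrow> real)
    \<Rightarrow> real^'x \<Rightarrow> ('c \<Rightarrow> real^'y) \<Rightarrow> real^'x" where
  "hypergrad P f g x ybar = (\<integral>z. hyper_integrand f g x (ybar (fst z)) (fst z) (snd z) \<partial>P)"

end

theory Submission
  imports Defs
begin

text \<open>Both hypergradients integrate the same map
  \<open>y \<mapsto> \<nabla>\<^sub>1f - \<nabla>\<^sup>2\<^sub>1\<^sub>2g [\<nabla>\<^sup>2\<^sub>2\<^sub>2g]\<^sup>-\<^sup>1 \<nabla>\<^sub>2f\<close>, only at different lower-level points, so it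
  suffices that this map is \<open>K\<close>-Lipschitz in \<open>y\<close> for every fixed \<open>(\<xi>, \<eta>)\<close> in the support.
  Strong convexity makes \<open>\<nabla>\<^sup>2\<^sub>2\<^sub>2g \<ge> \<mu>\<close>, so its inverse has norm at most \<open>1/\<mu>\<close> and
  \<open>\<parallel>[\<nabla>\<^sup>2\<^sub>2\<^sub>2g]\<^sup>-\<^sup>1 \<nabla>\<^sub>2f\<parallel> \<le> Lf0/\<mu>\<close>; perturbing each factor of the product
  separately gives the four terms of \<open>K\<close>. Integrating the pointwise bound over the support of
  \<open>P\<^sub>\<xi>\<close>, which has full measure, yields the claim.\<close>

lemma has_derivative_directional_tendsto:
  fixes F :: "'a::real_normed_vector \<Rightarrow> 'b::real_normed_vector"
  assumes "(F has_derivative D) (at p)"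
  shows "((\<lambda>t. inverse t *\<^sub>R (F (p + t *\<^sub>R w) - F p)) \<longlongrightarrow> D w) (at 0)"
proof -
  have "((\<lambda>t. p + t *\<^sub>R w) has_derivative (\<lambda>t. t *\<^sub>R w)) (at 0)"
    by (auto intro!: derivative_eq_intros)
  from has_derivative_compose[OF this, of F D] assms
  have "((\<lambda>t. F (p + t *\<^sub>R w)) has_derivative (\<lambda>t. t *\<^sub>R D w)) (at 0)"
    by (simp add: linear_simps has_derivative_bounded_linear)
  then have "((\<lambda>t. norm (F (p + t *\<^sub>R w) - F p - t *\<^sub>R D w) / norm t) \<longlongrightarrow> 0) (at 0)"
    by (simp add: has_derivative_iff_norm)
  moreover have "norm (F (p + t *\<^sub>R w) - F p - t *\<^sub>R D w) / norm t
      = norm (inverse t *\<^sub>R (F (p + t *\<^sub>R w) - F p) - D w)" if "t \<noteq> 0" for t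
  proof -
    have "inverse t *\<^sub>R (F (p + t *\<^sub>R w) - F p - t *\<^sub>R D w)
        = inverse t *\<^sub>R (F (p + t *\<^sub>R w) - F p) - D w"
      using that by (simp add: scaleR_right_diff_distrib)
    then show ?thesis
      by (metis norm_scaleR abs_inverse divide_inverse_commute real_norm_def)
  qed
  ultimately have "((\<lambda>t. norm (inverse t *\<^sub>R (F (p + t *\<^sub>R w) - F p) - D w)) \<longlongrightarrow> 0) (at 0)"
    by (subst (asm) tendsto_cong) (auto simp: eventually_at_filter)
  then show ?thesis
    by (simp add: tendsto_norm_zero_iff LIM_zero_iff)
qed

lemma has_derivative_norm_le_of_lipschitz:
  fixes F :: "'a::real_normed_vector \<Rightarrow> 'b::real_normed_vector"
  assumes D: "(F has_derivative D) (at p)" and L: "L-lipschitz_on UNIV F"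
  shows "norm (D w) \<le> L * norm w"
proof (rule tendsto_upperbound)
  show "((\<lambda>t. norm (inverse t *\<^sub>R (F (p + t *\<^sub>R w) - F p))) \<longlongrightarrow> norm (D w)) (at 0)"
    by (intro tendsto_norm has_derivative_directional_tendsto[OF D])
  have "norm (inverse t *\<^sub>R (F (p + t *\<^sub>R w) - F p)) \<le> L * norm w" if "t \<noteq> 0" for t
  proof -
    have "norm (F (p + t *\<^sub>R w) - F p) \<le> L * (\<bar>t\<bar> * norm w)"
      using lipschitz_onD[OF L, of "p + t *\<^sub>R w" p] by (simp add: dist_norm)
    then show ?thesis
      using that by (simp add: divide_simps mult_ac)
  qed
  then show "\<forall>\<^sub>F t in at 0. norm (inverse t *\<^sub>R (F (p + t *\<^sub>R w) - F p)) \<le> L * norm w"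
    by (auto simp: eventually_at_filter)
qed simp

lemma strongly_convex_on_first_order:
  fixes \<phi> :: "'a::real_inner \<Rightarrow> real"
  assumes sc: "strongly_convex_on \<mu> UNIV \<phi>" and D: "(\<phi> has_derivative (\<lambda>w. G \<bullet> w)) (at v)"
  shows "G \<bullet> (u - v) \<le> \<phi> u - \<phi> v - \<mu> / 2 * (norm (u - v))\<^sup>2"
proof (rule tendsto_le[of "at_right 0"])
  let ?q = "\<lambda>t. inverse t *\<^sub>R (\<phi> (v + t *\<^sub>R (u - v)) - \<phi> v)"
  show "(?q \<longlongrightarrow> G \<bullet> (u - v)) (at_right 0)"
    using has_derivative_directional_tendsto[OF D] by (rule tendsto_mono[OF at_le, rotated]) simp
  show "((\<lambda>t. \<phi> u - \<phi> v - \<mu> / 2 * (1 - t) * (norm (u - v))\<^sup>2)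
      \<longlongrightarrow> \<phi> u - \<phi> v - \<mu> / 2 * (norm (u - v))\<^sup>2) (at_right 0)"
    by (auto intro!: tendsto_eq_intros)
  have "?q t \<le> \<phi> u - \<phi> v - \<mu> / 2 * (1 - t) * (norm (u - v))\<^sup>2" if t: "t \<in> {0<..<1}" for t
  proof -
    have "v + t *\<^sub>R (u - v) = t *\<^sub>R u + (1 - t) *\<^sub>R v"
      by (simp add: algebra_simps)
    then have "\<phi> (v + t *\<^sub>R (u - v))
        \<le> t * \<phi> u + (1 - t) * \<phi> v - \<mu> / 2 * t * (1 - t) * (norm (u - v))\<^sup>2"
      using sc t unfolding strongly_convex_on_def by simp
    then have "\<phi> (v + t *\<^sub>R (u - v)) - \<phi> v \<le> t * (\<phi> u - \<phi> v - \<mu> / 2 * (1 - t) * (norm (u - v))\<^sup>2)"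
      by (simp add: algebra_simps)
    then show ?thesis
      using t by (simp add: divide_simps mult_ac)
  qed
  then show "\<forall>\<^sub>F t in at_right 0. ?q t \<le> \<phi> u - \<phi> v - \<mu> / 2 * (1 - t) * (norm (u - v))\<^sup>2"
    using eventually_at_right_real[of 0 1] by (auto elim: eventually_mono)
qed simp

lemma strongly_convex_on_grad_monotone:
  fixes \<phi> :: "'a::real_inner \<Rightarrow> real"
  assumes sc: "strongly_convex_on \<mu> UNIV \<phi>" and D: "\<And>y. (\<phi> has_derivative (\<lambda>w. G y \<bullet> w)) (at y)"
  shows "\<mu> * (norm (u - v))\<^sup>2 \<le> (G u - G v) \<bullet> (u - v)"
proof -
  have "G v \<bullet> (u - v) \<le> \<phi> u - \<phi> v - \<mu> / 2 * (norm (u - v))\<^sup>2"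
    and "G u \<bullet> (v - u) \<le> \<phi> v - \<phi> u - \<mu> / 2 * (norm (v - u))\<^sup>2"
    by (rule strongly_convex_on_first_order[OF sc D])+
  then show ?thesis
    by (simp add: inner_diff_left inner_diff_right norm_minus_commute)
qed

lemma has_derivative_coercive_of_strongly_monotone:
  fixes G :: "'a::real_inner \<Rightarrow> 'a"
  assumes mono: "\<And>u v. \<mu> * (norm (u - v))\<^sup>2 \<le> (G u - G v) \<bullet> (u - v)"
    and D: "(G has_derivative G') (at y)"
  shows "\<mu> * (norm v)\<^sup>2 \<le> G' v \<bullet> v"
proof (rule tendsto_lowerbound)
  let ?q = "\<lambda>t. inverse t *\<^sub>R (G (y + t *\<^sub>R v) - G y)"
  show "((\<lambda>t. ?q t \<bullet> v) \<longlongrightarrow> G' v \<bullet> v) (at 0)"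
    by (intro tendsto_inner tendsto_const has_derivative_directional_tendsto[OF D])
  have "\<mu> * (norm v)\<^sup>2 \<le> ?q t \<bullet> v" if "t \<noteq> 0" for t
  proof -
    have "t\<^sup>2 * (\<mu> * (norm v)\<^sup>2) = \<mu> * (norm (t *\<^sub>R v))\<^sup>2"
      by (simp add: power_mult_distrib)
    also have "\<dots> \<le> (G (y + t *\<^sub>R v) - G y) \<bullet> (t *\<^sub>R v)"
      using mono[of "y + t *\<^sub>R v" y] by simp
    also have "\<dots> = t\<^sup>2 * (?q t \<bullet> v)"
      using that by (simp add: power2_eq_square)
    finally have "t\<^sup>2 * (\<mu> * (norm v)\<^sup>2) \<le> t\<^sup>2 * (?q t \<bullet> v)" .
    then show ?thesis
      using that by simp
  qed
  then show "\<forall>\<^sub>F t in at 0. \<mu> * (norm v)\<^sup>2 \<le> ?q t \<bullet> v"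
    by (auto simp: eventually_at_filter)
qed simp

lemma has_derivative_grad:
  fixes h :: "'a::euclidean_space \<Rightarrow> real"
  assumes "h differentiable at p"
  shows "(h has_derivative (\<lambda>w. grad h p \<bullet> w)) (at p)"
proof -
  have D: "(h has_derivative frechet_derivative h (at p)) (at p)"
    using assms frechet_derivative_works by blast
  interpret linear "frechet_derivative h (at p)"
    using D has_derivative_linear by blast
  have "frechet_derivative h (at p) w = grad h p \<bullet> w" for w
  proof -
    have "frechet_derivative h (at p) w = frechet_derivative h (at p) (\<Sum>b\<in>Basis. (w \<bullet> b) *\<^sub>R b)"
      by (simp add: euclidean_representation)
    also have "\<dots> = grad h p \<bullet> w"
      by (simp add: sum scale grad_def inner_sum_right inner_commute mult.commute)
    finally show ?thesis .
  qed
  then have "frechet_derivative h (at p) = (\<lambda>w. grad h p \<bullet> w)"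
    by (rule ext)
  then show ?thesis
    using D by simp
qed

lemma norm_grad_le_of_lipschitz:
  fixes h :: "'a::euclidean_space \<Rightarrow> real"
  assumes "h differentiable at p" and L: "L-lipschitz_on UNIV h"
  shows "norm (grad h p) \<le> L"
proof -
  have "norm (grad h p) * norm (grad h p) \<le> L * norm (grad h p)"
    using has_derivative_norm_le_of_lipschitz[OF has_derivative_grad[OF assms(1)] L, of "grad h p"]
    by (simp add: power2_norm_eq_inner[symmetric] power2_eq_square)
  then show ?thesis
    using lipschitz_on_nonneg[OF L] by (cases "grad h p = 0") auto
qed

lemma norm_fst_le_norm: "norm (fst z) \<le> norm z"
  using norm_fst_le[of "fst z" "snd z"] by simp

lemma norm_snd_le_norm: "norm (snd z) \<le> norm z"
  using norm_snd_le[of "snd z" "fst z"] by simp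

lemma has_derivative_hess:
  assumes "grad h differentiable at p"
  shows "(grad h has_derivative hess h p) (at p)"
  using assms unfolding hess_def by (simp add: frechet_derivative_works[symmetric])

lemma bounded_linear_hess_Pair_0:
  fixes h :: "('a::euclidean_space) \<times> ('b::euclidean_space) \<Rightarrow> real"
  assumes "grad h differentiable at p"
  shows "bounded_linear (\<lambda>v. hess h p (0, v))"
proof -
  have "bounded_linear (hess h p)"
    using has_derivative_hess[OF assms] has_derivative_bounded_linear by blast
  then show ?thesis
    using bounded_linear_compose bounded_linear_Pair[OF bounded_linear_zero bounded_linear_ident]
    by blast
qed

lemma hess12_mult_vec:
  fixes h :: "(real^'n) \<times> (real^'m) \<Rightarrow> real"
  assumes "grad h differentiable at p"
  shows "hess12 h p *v v = fst (hess h p (0, v))"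
proof -
  have "bounded_linear (\<lambda>v. fst (hess h p (0, v)))"
    using bounded_linear_compose[OF bounded_linear_fst bounded_linear_hess_Pair_0[OF assms]] .
  then show ?thesis
    unfolding hess12_def by (metis matrix_vector_mul(3))
qed

lemma hess22_mult_vec:
  fixes h :: "(real^'n) \<times> (real^'m) \<Rightarrow> real"
  assumes "grad h differentiable at p"
  shows "hess22 h p *v v = snd (hess h p (0, v))"
proof -
  have "bounded_linear (\<lambda>v. snd (hess h p (0, v)))"
    using bounded_linear_compose[OF bounded_linear_snd bounded_linear_hess_Pair_0[OF assms]] .
  then show ?thesis
    unfolding hess22_def by (metis matrix_vector_mul(3))
qed

lemma hess22_coercive:
  fixes h :: "(real^'n) \<times> (real^'m) \<Rightarrow> real"
  assumes d1: "\<And>q. h differentiable at q" and d2: "\<And>q. grad h differentiable at q"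
    and sc: "strongly_convex_on \<mu> UNIV (\<lambda>y. h (x, y))"
  shows "\<mu> * (norm v)\<^sup>2 \<le> v \<bullet> (hess22 h (x, y) *v v)"
proof -
  have pair: "((\<lambda>y. (x, y)) has_derivative (\<lambda>v. (0, v))) (at y')" for y' :: "real^'m"
    by (auto intro!: derivative_eq_intros)
  have "((\<lambda>y. h (x, y)) has_derivative (\<lambda>w. grad h (x, y') \<bullet> (0, w))) (at y')" for y'
    using has_derivative_compose[OF pair has_derivative_grad[OF d1]] .
  then have "((\<lambda>y. h (x, y)) has_derivative (\<lambda>w. grad2 h (x, y') \<bullet> w)) (at y')" for y'
    by (simp add: grad2_def inner_Pair_0)
  then have mono: "\<mu> * (norm (u - w))\<^sup>2 \<le> (grad2 h (x, u) - grad2 h (x, w)) \<bullet> (u - w)" for u w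
    by (rule strongly_convex_on_grad_monotone[OF sc])
  have "((\<lambda>y. grad h (x, y)) has_derivative (\<lambda>v. hess h (x, y) (0, v))) (at y)"
    using has_derivative_compose[OF pair has_derivative_hess[OF d2]] .
  then have "((\<lambda>y. grad2 h (x, y)) has_derivative (\<lambda>v. snd (hess h (x, y) (0, v)))) (at y)"
    unfolding grad2_def by (rule has_derivative_snd)
  from has_derivative_coercive_of_strongly_monotone[OF mono this]
  show ?thesis
    by (simp add: hess22_mult_vec[OF d2] inner_commute)
qed

lemma norm_ge_of_coercive:
  fixes B :: "'a::real_inner \<Rightarrow> 'a"
  assumes "\<And>v. \<mu> * (norm v)\<^sup>2 \<le> v \<bullet> B v"
  shows "\<mu> * norm z \<le> norm (B z)"
proof -
  have "norm z * (\<mu> * norm z) \<le> norm z * norm (B z)"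
    using assms[of z] norm_cauchy_schwarz[of z "B z"] by (simp add: power2_eq_square mult_ac)
  then show ?thesis
    by (cases "z = 0") auto
qed

lemma matrix_inv_right_of_coercive:
  fixes B :: "real^'m^'m"
  assumes "\<mu> > 0" and coercive: "\<And>v. \<mu> * (norm v)\<^sup>2 \<le> v \<bullet> (B *v v)"
  shows "B *v (matrix_inv B *v w) = w"
proof -
  have "v = 0" if "B *v v = 0" for v
    using norm_ge_of_coercive[of \<mu> "(*v) B", OF coercive, of v] that \<open>\<mu> > 0\<close>
    by (simp add: mult_le_0_iff)
  then have "invertible B"
    by (simp add: invertible_left_inverse matrix_left_invertible_ker)
  then have "B ** matrix_inv B = mat 1"
    unfolding invertible_def matrix_inv_def by (rule someI2_ex) blast
  then show ?thesis
    by (simp add: matrix_vector_mul_assoc)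
qed

lemma hess_blocks_diff_le:
  fixes h :: "(real^'n) \<times> (real^'m) \<Rightarrow> real"
  assumes p: "grad h differentiable at p" and q: "grad h differentiable at q"
    and bound: "onorm (\<lambda>w. hess h p w - hess h q w) \<le> c"
  shows "norm (hess12 h p *v a - hess12 h q *v a) \<le> c * norm a"
    and "norm (hess22 h p *v a - hess22 h q *v a) \<le> c * norm a"
proof -
  have "bounded_linear (\<lambda>w. hess h p w - hess h q w)"
    using has_derivative_hess[OF p] has_derivative_hess[OF q] has_derivative_bounded_linear
    by (intro bounded_linear_sub) blast+
  from onorm[OF this, of "(0, a)"]
  have "norm (hess h p (0, a) - hess h q (0, a)) \<le> c * norm a"
    using mult_right_mono[OF bound norm_ge_zero, of "(0, a)"] by (simp add: norm_Pair)
  then show "norm (hess12 h p *v a - hess12 h q *v a) \<le> c * norm a"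
    and "norm (hess22 h p *v a - hess22 h q *v a) \<le> c * norm a"
    using norm_fst_le_norm[of "hess h p (0, a) - hess h q (0, a)"]
      norm_snd_le_norm[of "hess h p (0, a) - hess h q (0, a)"]
    by (simp_all add: hess12_mult_vec[OF p] hess12_mult_vec[OF q] hess22_mult_vec[OF p]
        hess22_mult_vec[OF q])
qed

lemma norm_hess12_le_of_lipschitz:
  fixes h :: "(real^'n) \<times> (real^'m) \<Rightarrow> real"
  assumes p: "grad h differentiable at p" and L: "L-lipschitz_on UNIV (grad h)"
  shows "norm (hess12 h p *v w) \<le> L * norm w"
proof -
  have "norm (fst (hess h p (0, w))) \<le> norm (hess h p (0, w))"
    by (rule norm_fst_le_norm)
  also have "\<dots> \<le> L * norm w"
    using has_derivative_norm_le_of_lipschitz[OF has_derivative_hess[OF p] L, of "(0, w)"]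
    by (simp add: norm_Pair)
  finally show ?thesis
    by (simp add: hess12_mult_vec[OF p])
qed

text \<open>Since \<open>a = B\<^sup>-\<^sup>1 v\<close>, this compares the implicit gradients \<open>u - A B\<^sup>-\<^sup>1 v\<close> and
  \<open>u' - A' B'\<^sup>-\<^sup>1 v'\<close>.\<close>
lemma implicit_gradient_perturbation:
  fixes A A' :: "'b::real_normed_vector \<Rightarrow> 'a::real_normed_vector" and B B' :: "'b \<Rightarrow> 'b"
  assumes "linear A'" "linear B'"
    and solve: "B a = v" and solve': "B' a' = v'"
    and coercive: "\<And>z. \<mu> * norm z \<le> norm (B z)" and coercive': "\<And>z. \<mu> * norm z \<le> norm (B' z)"
    and "\<mu> > 0"
    and du: "norm (u - u') \<le> e" and dv: "norm (v - v') \<le> e" and v: "norm v \<le> r"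
    and dA: "\<And>z. norm (A z - A' z) \<le> c * norm z" and dB: "\<And>z. norm (B z - B' z) \<le> c * norm z"
    and "0 \<le> c"
    and A': "\<And>z. norm (A' z) \<le> L * norm z" and "0 \<le> L"
  shows "norm ((u - A a) - (u' - A' a')) \<le> e + c * r / \<mu> + L * ((c * r / \<mu> + e) / \<mu>)"
proof -
  interpret A': linear A' by fact
  interpret B': linear B' by fact
  have "norm a \<le> r / \<mu>"
    using coercive[of a] solve v \<open>\<mu> > 0\<close> by (simp add: pos_le_divide_eq mult.commute)
  then have ca: "c * norm a \<le> c * r / \<mu>"
    using mult_left_mono[OF _ \<open>0 \<le> c\<close>] by fastforce
  have "\<mu> * norm (a - a') \<le> norm ((v - v') - (B a - B' a))"
    using coercive'[of "a - a'"] solve solve' by (simp add: B'.diff)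
  also have "\<dots> \<le> c * r / \<mu> + e"
    using norm_triangle_ineq4[of "v - v'" "B a - B' a"] dv dB[of a] ca by linarith
  finally have "norm (a - a') \<le> (c * r / \<mu> + e) / \<mu>"
    using pos_le_divide_eq[OF \<open>\<mu> > 0\<close>] by (metis mult.commute)
  then have da: "L * norm (a - a') \<le> L * ((c * r / \<mu> + e) / \<mu>)"
    using \<open>0 \<le> L\<close> by (rule mult_left_mono)
  have split: "(u - A a) - (u' - A' a') = ((u - u') - (A a - A' a)) - A' (a - a')"
    by (simp add: A'.diff algebra_simps)
  have "norm ((u - A a) - (u' - A' a')) \<le> e + c * norm a + L * norm (a - a')"
    unfolding split
    using du dA[of a] A'[of "a - a'"] norm_triangle_ineq4[of "(u - u') - (A a - A' a)" "A' (a - a')"]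
      norm_triangle_ineq4[of "u - u'" "A a - A' a"]
    by linarith
  then show ?thesis
    using ca da by linarith
qed

lemma hyper_integrand_lipschitz:
  fixes hf hg :: "(real^'n) \<times> (real^'m) \<Rightarrow> real"
  assumes fd1: "\<And>q. hf differentiable at q" and gd1: "\<And>q. hg differentiable at q"
    and gd2: "\<And>q. grad hg differentiable at q"
    and f0: "Lf0-lipschitz_on UNIV hf" and f1: "Lf1-lipschitz_on UNIV (grad hf)"
    and g1: "Lg1-lipschitz_on UNIV (grad hg)"
    and g2: "\<And>p q. onorm (\<lambda>w. hess hg p w - hess hg q w) \<le> Lg2 * dist p q"
    and "\<mu> > 0" and sc: "\<And>x'. strongly_convex_on \<mu> UNIV (\<lambda>y. hg (x', y))"
  shows "norm ((grad1 hf (x,y1) - hess12 hg (x,y1) *v (matrix_inv (hess22 hg (x,y1)) *v grad2 hf (x,y1)))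
            - (grad1 hf (x,y2) - hess12 hg (x,y2) *v (matrix_inv (hess22 hg (x,y2)) *v grad2 hf (x,y2))))
         \<le> (Lf1 + Lg2 * Lf0 / \<mu> + Lg2 * Lg1 * Lf0 / \<mu>\<^sup>2 + Lf1 * Lg1 / \<mu>) * norm (y1 - y2)"
proof -
  define d where "d = norm (y1 - y2)"
  have d: "dist (x, y1) (x, y2) = d"
    by (simp add: d_def dist_Pair_Pair dist_norm)
  have coercive: "\<mu> * (norm v)\<^sup>2 \<le> v \<bullet> (hess22 hg (x, y) *v v)" for y v
    by (rule hess22_coercive[OF gd1 gd2 sc])
  have "0 \<le> onorm (\<lambda>w. hess hg (x, y1) w - hess hg (x, y2) w)"
    using has_derivative_hess[OF gd2] has_derivative_bounded_linear
    by (intro onorm_pos_le bounded_linear_sub) blast+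
  then have "0 \<le> Lg2 * d"
    using g2[of "(x, y1)" "(x, y2)"] d by simp
  have "norm (grad hf (x, y1) - grad hf (x, y2)) \<le> Lf1 * d"
    using lipschitz_onD[OF f1, of "(x, y1)" "(x, y2)"] d by (simp add: dist_norm)
  then have du: "norm (grad1 hf (x, y1) - grad1 hf (x, y2)) \<le> Lf1 * d"
    and dv: "norm (grad2 hf (x, y1) - grad2 hf (x, y2)) \<le> Lf1 * d"
    using norm_fst_le_norm[of "grad hf (x, y1) - grad hf (x, y2)"]
      norm_snd_le_norm[of "grad hf (x, y1) - grad hf (x, y2)"]
    by (simp_all add: grad1_def grad2_def)
  have v1: "norm (grad2 hf (x, y1)) \<le> Lf0"
    using norm_grad_le_of_lipschitz[OF fd1 f0, of "(x, y1)"] norm_snd_le_norm[of "grad hf (x, y1)"]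
    by (simp add: grad2_def)
  have "norm ((grad1 hf (x,y1) - hess12 hg (x,y1) *v (matrix_inv (hess22 hg (x,y1)) *v grad2 hf (x,y1)))
            - (grad1 hf (x,y2) - hess12 hg (x,y2) *v (matrix_inv (hess22 hg (x,y2)) *v grad2 hf (x,y2))))
      \<le> Lf1 * d + Lg2 * d * Lf0 / \<mu> + Lg1 * ((Lg2 * d * Lf0 / \<mu> + Lf1 * d) / \<mu>)"
    by (rule implicit_gradient_perturbation[OF matrix_vector_mul_linear matrix_vector_mul_linear
          matrix_inv_right_of_coercive[OF \<open>\<mu> > 0\<close> coercive[where y = y1]]
          matrix_inv_right_of_coercive[OF \<open>\<mu> > 0\<close> coercive[where y = y2]]
          norm_ge_of_coercive[OF coercive[where y = y1]] norm_ge_of_coercive[OF coercive[where y = y2]] \<open>\<mu> > 0\<close>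
          du dv v1 hess_blocks_diff_le[OF gd2 gd2 g2[of "(x, y1)" "(x, y2)", unfolded d]]
          \<open>0 \<le> Lg2 * d\<close> norm_hess12_le_of_lipschitz[OF gd2 g1] lipschitz_on_nonneg[OF g1]])
  also have "\<dots> = (Lf1 + Lg2 * Lf0 / \<mu> + Lg2 * Lg1 * Lf0 / \<mu>\<^sup>2 + Lf1 * Lg1 / \<mu>) * d"
    using \<open>\<mu> > 0\<close> by (simp add: field_simps power2_eq_square)
  finally show ?thesis
    unfolding d_def .
qed

lemma AE_in_msupport_distr:
  fixes f :: "'a \<Rightarrow> 'b::{metric_space, second_countable_topology}"
  assumes f: "f \<in> M \<rightarrow>\<^sub>M borel"
  shows "AE x in M. f x \<in> msupport (distr M borel f)"
proof -
  let ?N = "distr M borel f"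
  obtain B :: "'b set set" where "countable B" and basis: "topological_basis B"
    using ex_countable_basis by blast
  define B0 where "B0 = {b\<in>B. emeasure ?N b = 0}"
  have "AE x in M. f x \<notin> b" if "b \<in> B0" for b
  proof -
    have "b \<in> sets borel"
      using basis that by (auto simp: B0_def topological_basis_def)
    then have "f -` b \<inter> space M \<in> null_sets M"
      using that measurable_sets[OF f] by (auto simp: B0_def emeasure_distr[OF f])
    then show ?thesis
      by (rule AE_I') auto
  qed
  then have "AE x in M. \<forall>b\<in>B0. f x \<notin> b"
    using \<open>countable B\<close> by (subst AE_ball_countable) (auto simp: B0_def)
  then show ?thesis
  proof (rule eventually_mono)
    fix x assume outside_null: "\<forall>b\<in>B0. f x \<notin> b"
    have "0 < emeasure ?N (ball (f x) r)" if "r > 0" for r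
    proof -
      obtain b where "b \<in> B" "f x \<in> b" "b \<subseteq> ball (f x) r"
        using topological_basisE[OF basis open_ball, of "f x" "f x" r] \<open>r > 0\<close> by auto
      then have "0 < emeasure ?N b" and "b \<in> sets ?N"
        using outside_null basis by (auto simp: B0_def topological_basis_def zero_less_iff_neq_zero)
      with \<open>b \<subseteq> ball (f x) r\<close> show ?thesis
        by (metis emeasure_mono order_less_le_trans sets_distr sets_borel open_ball borel_open)
    qed
    then show "f x \<in> msupport ?N"
      by (simp add: msupport_def)
  qed
qed

lemma norm_integral_diff_le_integral_distr:
  fixes F F' :: "'a \<Rightarrow> 'b::{banach, second_countable_topology}" and e :: "'c::topological_space \<Rightarrow> real"
  assumes \<pi>: "\<pi> \<in> M \<rightarrow>\<^sub>M borel" and "integrable M F" "integrable M F'"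
    and int_e: "integrable (distr M borel \<pi>) e"
    and bound: "AE z in M. norm (F z - F' z) \<le> K * e (\<pi> z)"
  shows "norm ((\<integral>z. F z \<partial>M) - (\<integral>z. F' z \<partial>M)) \<le> K * (\<integral>\<xi>. e \<xi> \<partial>distr M borel \<pi>)"
proof -
  have e: "e \<in> borel_measurable borel"
    using borel_measurable_integrable[OF int_e] by simp
  have "norm ((\<integral>z. F z \<partial>M) - (\<integral>z. F' z \<partial>M)) = norm (\<integral>z. F z - F' z \<partial>M)"
    using assms by simp
  also have "\<dots> \<le> (\<integral>z. K * e (\<pi> z) \<partial>M)"
    using assms integrable_distr_eq[OF \<pi> e]
    by (intro order_trans[OF integral_norm_bound] integral_mono_AE) auto
  also have "\<dots> = K * (\<integral>\<xi>. e \<xi> \<partial>distr M borel \<pi>)"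
    by (simp add: integral_distr[OF \<pi> e])
  finally show ?thesis .
qed

theorem proposition1:
  fixes P :: "((real^'dxi) \<times> (real^'deta)) measure"
    and K :: "real^'dxi \<Rightarrow> (real^'deta) measure"
    and f g :: "real^'dx \<Rightarrow> real^'dy \<Rightarrow> real^'dxi \<Rightarrow> real^'deta \<Rightarrow> real"
    and Lf0 Lf1 Lg1 Lg2 \<mu> \<sigma>f \<sigma>g1 \<sigma>g2 :: real
    and ystar :: "real^'dx \<Rightarrow> real^'dxi \<Rightarrow> real^'dy"
    and \<Phi> :: "real^'dxi \<Rightarrow> real^'N"
    and Wstar :: "real^'dx \<Rightarrow> real^'N^'dy"
    and x :: "real^'dx"
  defines "Pxi \<equiv> distr P borel fst"
  defines "Xi \<equiv> msupport Pxi"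
  defines "G \<equiv> (\<lambda>x' y \<xi>. \<integral>\<eta>. g x' y \<xi> \<eta> \<partial>K \<xi>)"
  defines "GPhi \<equiv> (\<lambda>x' W. \<integral>z. g x' (W *v \<Phi> (fst z)) (fst z) (snd z) \<partial>P)"
  assumes P_prob: "prob_space P" and P_sets: "sets P = sets borel"
    and K_kernel: "K \<in> borel \<rightarrow>\<^sub>M prob_algebra borel"
    and K_cond: "\<forall>A\<in>sets borel. emeasure P A = (\<integral>\<^sup>+\<xi>. emeasure (K \<xi>) (Pair \<xi> -` A) \<partial>Pxi)"
    \<comment> \<open>twice differentiability in (x,y)\<close>
    and f_diff: "\<forall>\<xi>\<in>Xi. \<forall>\<eta> p. sec f \<xi> \<eta> differentiable at p \<and> grad (sec f \<xi> \<eta>) differentiable at p"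
    and g_diff: "\<forall>\<xi>\<in>Xi. \<forall>\<eta> p. sec g \<xi> \<eta> differentiable at p \<and> grad (sec g \<xi> \<eta>) differentiable at p"
    \<comment> \<open>Assumption 1 (i)\<close>
    and f_lip: "\<forall>\<xi>\<in>Xi. \<forall>\<eta>. Lf0-lipschitz_on UNIV (sec f \<xi> \<eta>)"
    and gradf_lip: "\<forall>\<xi>\<in>Xi. \<forall>\<eta>. Lf1-lipschitz_on UNIV (grad (sec f \<xi> \<eta>))"
    and gradg_lip: "\<forall>\<xi>\<in>Xi. \<forall>\<eta>. Lg1-lipschitz_on UNIV (grad (sec g \<xi> \<eta>))"
    and hessg_lip: "\<forall>\<xi>\<in>Xi. \<forall>\<eta>. \<forall>p q. onorm (\<lambda>w. hess (sec g \<xi> \<eta>) p w - hess (sec g \<xi> \<eta>) q w) \<le> Lg2 * dist p q"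
    \<comment> \<open>Assumption 1 (ii)\<close>
    and mu_pos: "\<mu> > 0"
    and g_sc: "\<forall>\<xi>\<in>Xi. \<forall>\<eta> x'. strongly_convex_on \<mu> UNIV (\<lambda>y. g x' y \<xi> \<eta>)"
    \<comment> \<open>Assumption 1 (iii): unbiasedness and bounded conditional variances\<close>
    and f_unb: "\<forall>\<xi>\<in>Xi. \<forall>p. (\<integral>\<eta>. grad (sec f \<xi> \<eta>) p \<partial>K \<xi>)
                            = grad (\<lambda>q. \<integral>\<eta>. sec f \<xi> \<eta> q \<partial>K \<xi>) p"
    and f_var: "\<forall>\<xi>\<in>Xi. \<forall>p. (\<integral>\<eta>. (norm (grad (sec f \<xi> \<eta>) p - (\<integral>\<eta>'. grad (sec f \<xi> \<eta>') p \<partial>K \<xi>)))\<^sup>2 \<partial>K \<xi>)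
                            \<le> \<sigma>f\<^sup>2"
    and g1_unb: "\<forall>\<xi>\<in>Xi. \<forall>p. (\<integral>\<eta>. grad (sec g \<xi> \<eta>) p \<partial>K \<xi>)
                            = grad (\<lambda>q. \<integral>\<eta>. sec g \<xi> \<eta> q \<partial>K \<xi>) p"
    and g1_var: "\<forall>\<xi>\<in>Xi. \<forall>p. (\<integral>\<eta>. (norm (grad (sec g \<xi> \<eta>) p - (\<integral>\<eta>'. grad (sec g \<xi> \<eta>') p \<partial>K \<xi>)))\<^sup>2 \<partial>K \<xi>)
                            \<le> \<sigma>g1\<^sup>2"
    and g2_unb: "\<forall>\<xi>\<in>Xi. \<forall>p w. (\<integral>\<eta>. hess (sec g \<xi> \<eta>) p w \<partial>K \<xi>)
                            = hess (\<lambda>q. \<integral>\<eta>. sec g \<xi> \<eta> q \<partial>K \<xi>) p w"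
    and g2_var: "\<forall>\<xi>\<in>Xi. \<forall>p. (\<integral>\<eta>. (onorm (\<lambda>w. hess (sec g \<xi> \<eta>) p w
                               - (\<integral>\<eta>'. hess (sec g \<xi> \<eta>') p w \<partial>K \<xi>)))\<^sup>2 \<partial>K \<xi>)
                            \<le> \<sigma>g2\<^sup>2"
    \<comment> \<open>lower-level solutions\<close>
    and ystar_min: "\<forall>x'. \<forall>\<xi>\<in>Xi. \<forall>y. G x' (ystar x' \<xi>) \<xi> \<le> G x' y \<xi>"
    and Wstar_min: "\<forall>x'. \<forall>W. GPhi x' (Wstar x') \<le> GPhi x' W"
    \<comment> \<open>the expectations involved exist\<close>
    and int_F: "integrable P (\<lambda>z. hyper_integrand f g x (ystar x (fst z)) (fst z) (snd z))"
    and int_FPhi: "integrable P (\<lambda>z. hyper_integrand f g x (Wstar x *v \<Phi> (fst z)) (fst z) (snd z))"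
    and int_err: "integrable Pxi (\<lambda>\<xi>. norm (Wstar x *v \<Phi> \<xi> - ystar x \<xi>))"
  shows "norm (hypergrad P f g x (ystar x) - hypergrad P f g x (\<lambda>\<xi>. Wstar x *v \<Phi> \<xi>))
         \<le> (Lf1 + Lg2 * Lf0 / \<mu> + Lg2 * Lg1 * Lf0 / \<mu>\<^sup>2 + Lf1 * Lg1 / \<mu>)
            * (\<integral>\<xi>. norm (Wstar x *v \<Phi> \<xi> - ystar x \<xi>) \<partial>Pxi)"
proof -
  have fst_meas: "fst \<in> P \<rightarrow>\<^sub>M borel"
    using measurable_fst[of "borel :: (real^'dxi) measure" "borel :: (real^'deta) measure"]
    by (simp add: measurable_cong_sets[OF P_sets refl] borel_prod)
  have pointwise: "norm (hyper_integrand f g x (ystar x \<xi>) \<xi> \<eta> - hyper_integrand f g x (Wstar x *v \<Phi> \<xi>) \<xi> \<eta>)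
      \<le> (Lf1 + Lg2 * Lf0 / \<mu> + Lg2 * Lg1 * Lf0 / \<mu>\<^sup>2 + Lf1 * Lg1 / \<mu>) * norm (Wstar x *v \<Phi> \<xi> - ystar x \<xi>)"
    if "\<xi> \<in> Xi" for \<xi> \<eta>
  proof -
    have "strongly_convex_on \<mu> UNIV (\<lambda>y. sec g \<xi> \<eta> (x', y))" for x'
      using g_sc that by (simp add: sec_def)
    then show ?thesis
      unfolding hyper_integrand_def norm_minus_commute[of "Wstar x *v \<Phi> \<xi>"]
      using f_diff g_diff f_lip gradf_lip gradg_lip hessg_lip mu_pos that
      by (intro hyper_integrand_lipschitz) auto
  qed
  have "AE z in P. fst z \<in> Xi"
    unfolding Xi_def Pxi_def by (rule AE_in_msupport_distr[OF fst_meas])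
  then show ?thesis
    unfolding hypergrad_def Pxi_def
    using int_F int_FPhi int_err pointwise
    by (intro norm_integral_diff_le_integral_distr[OF fst_meas]) (auto simp: Pxi_def elim: eventually_mono)
qed

end
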